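(* Let $Q$ be a commutative noetherian local ring and let $f,g\in Q$ be regular elements of $Q$ such that $(f)\cap(g)=(fg)$. Set $A=Q/(fg)$ and let $x,y\in A$ be the cosets of $f,g$. If $\operatorname{depth} Q>2$, then there exist elements of $A$ that are regular on the $A$-module $A/(x,y)$.
   Context: An element $a\in A$ is regular on a finitely generated $A$-module $M$ if $a$ is a non-unit and multiplication by $a$ on $M$ is injective. *)

theory Defs
  imports "HOL-Algebra.Algebra" "HOL-Library.Extended_Nat"
begin

definition local_ring :: "('a, 'b) ring_scheme \<Rightarrow> bool" where
  "local_ring R \<longleftrightarrow> cring R \<and> (\<exists>!m. maximalideal m R)"

definition max_ideal :: "('a, 'b) ring_scheme \<Rightarrow> 'a set" where
  "max_ideal R = (THE m. maximalideal m R)"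

text \<open>Element a of R is regular on the (cyclic, finitely generated) R-module R/I:
  a is a non-unit of R and multiplication by a on R/I is injective.
  (Regular on R itself corresponds to I = {0}.)\<close>
definition regular_on_quot :: "('a, 'b) ring_scheme \<Rightarrow> 'a set \<Rightarrow> 'a \<Rightarrow> bool" where
  "regular_on_quot R I a \<longleftrightarrow> a \<in> carrier R \<and> a \<notin> Units R \<and>
     (\<forall>b \<in> carrier R. a \<otimes>\<^bsub>R\<^esub> b \<in> I \<longrightarrow> b \<in> I)"

definition regular_sequence :: "('a, 'b) ring_scheme \<Rightarrow> 'a set \<Rightarrow> 'a list \<Rightarrow> bool" where
  "regular_sequence R m xs \<longleftrightarrow> set xs \<subseteq> m \<and>
     (\<forall>i < length xs. \<forall>b \<in> carrier R.
        xs ! i \<otimes>\<^bsub>R\<^esub> b \<in> Idl\<^bsub>R\<^esub> (set (take i xs)) \<longrightarrow> b \<in> Idl\<^bsub>R\<^esub> (set (take i xs))) \<and>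
     Idl\<^bsub>R\<^esub> (set xs) \<noteq> carrier R"

definition depth :: "('a, 'b) ring_scheme \<Rightarrow> enat" where
  "depth R = Sup {enat (length xs) | xs. regular_sequence R (max_ideal R) xs}"

end

theory Submission
  imports Defs
begin

text \<open>As \<open>(fg) \<subseteq> (f,g)\<close>, the coset of any \<open>a\<close> in the maximal ideal \<open>m\<close> that is a
  nonzerodivisor on \<open>Q/(f,g)\<close> is regular on \<open>A/(x,y)\<close>. By prime avoidance over the finitely many
  associated primes of \<open>Q/(f,g)\<close> such an \<open>a\<close> exists unless \<open>m\<close> annihilates a nonzero element of
  \<open>Q/(f,g)\<close>, i.e. unless \<open>depth Q/(f,g) = 0\<close>. Whether \<open>depth Q/(I + (c)) = 0\<close> does not depend on
  the choice of \<open>c \<in> m\<close> regular on \<open>Q/I\<close>, and \<open>(f) \<inter> (g) = (fg)\<close> makes \<open>g\<close> regular on \<open>Q/(f)\<close>.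
  Take a regular sequence \<open>z\<^sub>1, z\<^sub>2, z\<^sub>3\<close> in \<open>m\<close> and, again by prime avoidance, \<open>h \<in> m\<close> regular on
  \<open>Q\<close>, \<open>Q/(f)\<close> and \<open>Q/(z\<^sub>1)\<close>. Then one passes from \<open>(f,g)\<close> to \<open>(f,h) = (h,f)\<close>, to
  \<open>(h,z\<^sub>1) = (z\<^sub>1,h)\<close> and to \<open>(z\<^sub>1,z\<^sub>2)\<close>, whose depth is positive.\<close>

no_notation Sum_Type.Plus (infixr \<open><+>\<close> 65)

definition colon :: "('a, 'b) ring_scheme \<Rightarrow> 'a set \<Rightarrow> 'a \<Rightarrow> 'a set" where
  "colon R I w = {r \<in> carrier R. r \<otimes>\<^bsub>R\<^esub> w \<in> I}"

definition nonzerodivisor_mod :: "('a, 'b) ring_scheme \<Rightarrow> 'a set \<Rightarrow> 'a \<Rightarrow> bool" where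
  "nonzerodivisor_mod R I a \<longleftrightarrow> (\<forall>r \<in> carrier R. a \<otimes>\<^bsub>R\<^esub> r \<in> I \<longrightarrow> r \<in> I)"

text \<open>For \<open>M\<close> the maximal ideal of a local ring this says \<open>depth R/I = 0\<close>.\<close>
definition annihilates_nonzero :: "('a, 'b) ring_scheme \<Rightarrow> 'a set \<Rightarrow> 'a set \<Rightarrow> bool" where
  "annihilates_nonzero R I M \<longleftrightarrow> (\<exists>w \<in> carrier R - I. M \<subseteq> colon R I w)"

definition associated_primes :: "('a, 'b) ring_scheme \<Rightarrow> 'a set \<Rightarrow> 'a set set" where
  "associated_primes R I = {P. primeideal P R \<and> (\<exists>w \<in> carrier R - I. P = colon R I w)}"

lemma regular_on_quot_imp_nonzerodivisor_mod:
  "regular_on_quot R I a \<Longrightarrow> nonzerodivisor_mod R I a"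
  by (simp add: regular_on_quot_def nonzerodivisor_mod_def)

context cring
begin

lemma ideal_add_left_iff:
  assumes "ideal I R" "i \<in> I" "x \<in> carrier R"
  shows "i \<oplus> x \<in> I \<longleftrightarrow> x \<in> I"
proof -
  interpret ideal I R by fact
  have "\<ominus> i \<oplus> (i \<oplus> x) = x" using Icarr[OF assms(2)] assms(3) by algebra
  then show ?thesis using assms(2) a_closed a_inv_closed by metis
qed

lemma mem_add_PIdl_iff: "x \<in> I <+> PIdl a \<longleftrightarrow> (\<exists>i \<in> I. \<exists>r \<in> carrier R. x = i \<oplus> r \<otimes> a)"
  unfolding set_add_def' cgenideal_def by blast

lemma add_PIdl_ideal: "ideal I R \<Longrightarrow> a \<in> carrier R \<Longrightarrow> ideal (I <+> PIdl a) R"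
  by (simp add: add_ideals cgenideal_ideal)

lemma subset_add_PIdl:
  assumes "ideal I R" "a \<in> carrier R"
  shows "I \<subseteq> I <+> PIdl a"
proof
  fix i assume "i \<in> I"
  then have "i = i \<oplus> \<zero> \<otimes> a" using assms ideal.Icarr by fastforce
  then show "i \<in> I <+> PIdl a" using \<open>i \<in> I\<close> assms(2) unfolding mem_add_PIdl_iff by blast
qed

lemma gen_mem_add_PIdl:
  assumes "ideal I R" "a \<in> carrier R"
  shows "a \<in> I <+> PIdl a"
proof -
  have "a = \<zero> \<oplus> \<one> \<otimes> a" using assms(2) by simp
  then show ?thesis
    using additive_subgroup.zero_closed[OF ideal.axioms(1)[OF assms(1)]] unfolding mem_add_PIdl_iff by blast
qed

lemma zero_add_PIdl:
  assumes "a \<in> carrier R"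
  shows "{\<zero>} <+> PIdl a = PIdl a"
  unfolding set_eq_iff mem_add_PIdl_iff using assms by (auto simp: cgenideal_def)

lemma add_PIdl_commute:
  assumes "a \<in> carrier R" "b \<in> carrier R"
  shows "PIdl a <+> PIdl b = PIdl b <+> PIdl a"
  using set_add_comm cgenideal_ideal[THEN ideal.axioms(1), THEN additive_subgroup.a_subset] assms
  by metis

lemma genideal_pair_eq_add_PIdl:
  assumes a: "a \<in> carrier R" and b: "b \<in> carrier R"
  shows "Idl {a, b} = PIdl a <+> PIdl b"
proof
  have "{a, b} \<subseteq> PIdl a <+> PIdl b"
    using subset_add_PIdl[OF cgenideal_ideal[OF a] b] cgenideal_self[OF a]
      gen_mem_add_PIdl[OF cgenideal_ideal[OF a] b] by blast
  then show "Idl {a, b} \<subseteq> PIdl a <+> PIdl b"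
    by (rule genideal_minimal[OF add_PIdl_ideal[OF cgenideal_ideal[OF a] b]])
next
  have J: "ideal (Idl {a, b}) R" using genideal_ideal a b by simp
  interpret J: ideal "Idl {a, b}" R by (rule J)
  have "PIdl a \<subseteq> Idl {a, b}" "PIdl b \<subseteq> Idl {a, b}"
    using cgenideal_minimal[OF J] genideal_self[of "{a, b}"] a b by auto
  then show "PIdl a <+> PIdl b \<subseteq> Idl {a, b}"
    unfolding set_add_def' by blast
qed

lemma colon_ideal:
  assumes I: "ideal I R" and w: "w \<in> carrier R"
  shows "ideal (colon R I w) R"
proof -
  interpret I: ideal I R by (rule I)
  show ?thesis
  proof (rule idealI)
    show "subgroup (colon R I w) (add_monoid R)"
    proof (rule add.subgroupI)
      show "colon R I w \<noteq> {}" using w by (auto simp: colon_def intro!: exI[of _ \<zero>])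
    qed (auto simp: colon_def l_distr l_minus a_inv_def[symmetric] w)
    show "x \<otimes> r \<in> colon R I w" if "r \<in> colon R I w" "x \<in> carrier R" for r x
      using that I.I_l_closed[of "r \<otimes> w" x] w by (auto simp: colon_def m_assoc)
    show "r \<otimes> x \<in> colon R I w" if "r \<in> colon R I w" "x \<in> carrier R" for r x
      using that I.I_l_closed[of "r \<otimes> w" x] w by (auto simp: colon_def m_assoc m_lcomm)
  qed (rule ring_axioms)
qed

lemma colon_subset_colon_mult:
  assumes "ideal I R" "w \<in> carrier R" "x \<in> carrier R"
  shows "colon R I w \<subseteq> colon R I (x \<otimes> w)"
proof
  fix r assume "r \<in> colon R I w"
  then have r: "r \<in> carrier R" "x \<otimes> (r \<otimes> w) \<in> I"
    using ideal.I_l_closed[OF assms(1)] assms(3) by (auto simp: colon_def)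
  moreover have "r \<otimes> (x \<otimes> w) = x \<otimes> (r \<otimes> w)" using r(1) assms(2,3) by (simp add: m_lcomm)
  ultimately show "r \<in> colon R I (x \<otimes> w)" using assms(2,3) by (simp add: colon_def)
qed

lemma colon_mult_eq:
  assumes I: "ideal I R" and w: "w \<in> carrier R" and s: "s \<in> carrier R" "s \<notin> colon R I w"
    and P: "primeideal (colon R I w) R"
  shows "colon R I (s \<otimes> w) = colon R I w"
proof
  show "colon R I w \<subseteq> colon R I (s \<otimes> w)" by (rule colon_subset_colon_mult[OF I w s(1)])
  show "colon R I (s \<otimes> w) \<subseteq> colon R I w"
  proof
    fix t assume t: "t \<in> colon R I (s \<otimes> w)"
    then have "t \<in> carrier R" "t \<otimes> s \<in> colon R I w"
      using w s by (auto simp: colon_def m_assoc)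
    then show "t \<in> colon R I w" using primeideal.I_prime[OF P] s by blast
  qed
qed

lemma colon_add_mem:
  assumes I: "ideal I R" and i: "i \<in> I" and w: "w \<in> carrier R"
  shows "colon R I (i \<oplus> w) = colon R I w"
proof -
  have "t \<otimes> (i \<oplus> w) \<in> I \<longleftrightarrow> t \<otimes> w \<in> I" if t: "t \<in> carrier R" for t
  proof -
    have "t \<otimes> (i \<oplus> w) = t \<otimes> i \<oplus> t \<otimes> w" using t w ideal.Icarr[OF I i] by (simp add: r_distr)
    then show ?thesis using ideal_add_left_iff[OF I ideal.I_l_closed[OF I i t]] t w by simp
  qed
  then show ?thesis by (auto simp: colon_def)
qed

lemma colon_of_mem_add_PIdl:
  assumes J: "ideal J R" and I: "ideal I R" "J \<subseteq> I"
    and w0: "w0 \<in> carrier R" "primeideal (colon R I w0) R"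
    and w: "w \<in> I <+> PIdl w0" "w \<notin> I" "primeideal (colon R J w) R"
  shows "colon R J w = colon R I w0 \<or> (\<exists>v \<in> I - J. colon R J w = colon R J v)"
proof -
  have wc: "w \<in> carrier R" using ideal.Icarr[OF add_PIdl_ideal[OF I(1) w0(1)] w(1)] .
  show ?thesis
  proof (cases "\<exists>s \<in> carrier R. s \<otimes> w \<in> I - J")
    case True
    then obtain s where s: "s \<in> carrier R" "s \<otimes> w \<in> I - J" by blast
    then have "s \<notin> colon R J w" by (simp add: colon_def)
    then have "colon R J (s \<otimes> w) = colon R J w" using colon_mult_eq[OF J wc s(1) _ w(3)] by simp
    then show ?thesis using s(2) by metis
  next
    case False
    obtain i r where ir: "i \<in> I" "r \<in> carrier R" "w = i \<oplus> r \<otimes> w0"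
      using w(1) unfolding mem_add_PIdl_iff by blast
    have r: "r \<notin> colon R I w0"
    proof
      assume "r \<in> colon R I w0"
      then have "w \<in> I" using ir additive_subgroup.a_closed[OF ideal.axioms(1)[OF I(1)]]
        by (simp add: colon_def)
      with w(2) show False ..
    qed
    have "colon R J w = colon R I w" using False I(2) by (auto simp: colon_def)
    also have "\<dots> = colon R I (r \<otimes> w0)" using colon_add_mem[OF I(1) ir(1)] ir(2,3) w0(1) by simp
    also have "\<dots> = colon R I w0" by (rule colon_mult_eq[OF I(1) w0(1) ir(2) r w0(2)])
    finally show ?thesis ..
  qed
qed

lemma ex_mem_ideals_not_mem_prime:
  assumes "finite S" "\<forall>I \<in> S. ideal I R \<and> \<not> I \<subseteq> P" "primeideal P R"
  shows "\<exists>c \<in> carrier R - P. \<forall>I \<in> S. c \<in> I"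
  using assms
proof (induction S rule: finite_induct)
  case empty
  have "\<one> \<notin> P"
    using ideal.one_imp_carrier[OF primeideal.axioms(1)] primeideal.I_notcarr empty.prems(2) by metis
  then show ?case by auto
next
  case (insert I S)
  obtain c where c: "c \<in> carrier R - P" "\<forall>I' \<in> S. c \<in> I'" using insert by auto
  have I: "ideal I R" "\<not> I \<subseteq> P" using insert.prems by auto
  then obtain q where q: "q \<in> I" "q \<notin> P" by blast
  have qc: "q \<in> carrier R" using ideal.Icarr[OF I(1) q(1)] .
  have "c \<otimes> q \<notin> P" using primeideal.I_prime[OF insert.prems(2)] c(1) qc q(2) by blast
  moreover have "\<forall>I' \<in> insert I S. c \<otimes> q \<in> I'"
    using ideal.I_l_closed[OF I(1) q(1)] ideal.I_r_closed[of _ R c q] c insert.prems(1) qc by auto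
  ultimately show ?case using c(1) qc by blast
qed

lemma prime_avoidance_antichain:
  assumes "finite S" "\<forall>P \<in> S. primeideal P R" "\<forall>P \<in> S. \<forall>P' \<in> S. P \<subseteq> P' \<longrightarrow> P = P'"
    and I: "ideal I R" "\<forall>P \<in> S. \<not> I \<subseteq> P"
  shows "\<exists>x \<in> I. \<forall>P \<in> S. x \<notin> P"
  using assms
proof (induction S rule: finite_induct)
  case empty
  then show ?case using additive_subgroup.zero_closed[OF ideal.axioms(1)[OF I(1)]] by blast
next
  case (insert P S)
  interpret I: ideal I R by (rule I(1))
  obtain x where x: "x \<in> I" "\<forall>Q \<in> S. x \<notin> Q" using insert by auto
  have P: "primeideal P R" using insert.prems by auto
  show ?case
  proof (cases "x \<in> P")
    case False
    then show ?thesis using x by auto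
  next
    case True
    obtain y where y: "y \<in> I" "y \<notin> P" using insert.prems by auto
    have "\<forall>Q \<in> S. ideal Q R \<and> \<not> Q \<subseteq> P"
      using insert.prems(1,2) insert.hyps(2) primeideal.axioms(1) by blast
    then obtain c where c: "c \<in> carrier R - P" "\<forall>Q \<in> S. c \<in> Q"
      using ex_mem_ideals_not_mem_prime[OF insert.hyps(1) _ P] by blast
    \<comment> \<open>\<open>x \<in> P\<close> but \<open>y c \<notin> P\<close>, while \<open>x \<notin> Q\<close> but \<open>y c \<in> Q\<close> for the other \<open>Q\<close>.\<close>
    have yc: "y \<otimes> c \<in> I" "y \<otimes> c \<notin> P" "y \<otimes> c \<in> carrier R"
      using I.I_r_closed[OF y(1)] primeideal.I_prime[OF P I.Icarr[OF y(1)]] y(2) c(1) by auto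
    have xc: "x \<in> carrier R" by (rule I.Icarr[OF x(1)])
    have "x \<oplus> y \<otimes> c \<notin> P"
      using ideal_add_left_iff[OF primeideal.axioms(1)[OF P] True yc(3)] yc(2) by simp
    moreover have "x \<oplus> y \<otimes> c \<notin> Q" if Q: "Q \<in> S" for Q
    proof -
      have Qi: "ideal Q R" using insert.prems(1) Q primeideal.axioms(1) by blast
      have "y \<otimes> c \<in> Q" using ideal.I_l_closed[OF Qi] c Q I.Icarr[OF y(1)] by blast
      then show ?thesis using ideal_add_left_iff[OF Qi _ xc] x(2) Q a_comm[OF xc yc(3)] by auto
    qed
    moreover have "x \<oplus> y \<otimes> c \<in> I" using yc(1) x(1) by blast
    ultimately show ?thesis by blast
  qed
qed

lemma prime_avoidance:
  assumes S: "finite S" "\<forall>P \<in> S. primeideal P R" and I: "ideal I R" "\<forall>P \<in> S. \<not> I \<subseteq> P"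
  shows "\<exists>x \<in> I. \<forall>P \<in> S. x \<notin> P"
proof -
  define S' where "S' = {P \<in> S. \<forall>P' \<in> S. P \<subseteq> P' \<longrightarrow> P = P'}"
  obtain x where x: "x \<in> I" "\<forall>P \<in> S'. x \<notin> P"
    using prime_avoidance_antichain[of S' I] S I unfolding S'_def by auto
  have "x \<notin> P" if "P \<in> S" for P
  proof -
    obtain P' where "P' \<in> S" "P \<subseteq> P'" "\<forall>P'' \<in> S. P' \<subseteq> P'' \<longrightarrow> P' = P''"
      using finite_has_maximal2[OF S(1) \<open>P \<in> S\<close>] by auto
    then show ?thesis using x unfolding S'_def by auto
  qed
  then show ?thesis using x(1) by blast
qed

lemma nonzerodivisor_mod_not_annihilates_nonzero:
  assumes "nonzerodivisor_mod R I a" "a \<in> M"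
  shows "\<not> annihilates_nonzero R I M"
  using assms unfolding nonzerodivisor_mod_def annihilates_nonzero_def colon_def by blast

lemma mult_mem_add_PIdl_transfer:
  assumes I: "ideal I R" and a: "a \<in> carrier R" and b: "b \<in> carrier R"
    and t: "t \<in> carrier R" and w: "w \<in> carrier R"
    and i: "i \<in> I" and u: "u \<in> carrier R" and bw: "b \<otimes> w = i \<oplus> u \<otimes> a"
    and tw: "t \<otimes> w \<in> I <+> PIdl a" and ra: "nonzerodivisor_mod R I a"
  shows "t \<otimes> u \<in> I <+> PIdl b"
proof -
  interpret I: ideal I R by (rule I)
  obtain i' s where is': "i' \<in> I" "s \<in> carrier R" "t \<otimes> w = i' \<oplus> s \<otimes> a"
    using tw unfolding mem_add_PIdl_iff by blast
  have ic: "i \<in> carrier R" "i' \<in> carrier R" using I.Icarr i is'(1) by auto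
  have "a \<otimes> (b \<otimes> s \<ominus> t \<otimes> u) = b \<otimes> (s \<otimes> a) \<ominus> t \<otimes> (u \<otimes> a)"
    using a b t u is'(2) by algebra
  also have "s \<otimes> a = t \<otimes> w \<ominus> i'" using is'(2) ic a t w by (subst is'(3)) algebra
  also have "u \<otimes> a = b \<otimes> w \<ominus> i" using u ic a b w by (subst bw) algebra
  also have "b \<otimes> (t \<otimes> w \<ominus> i') \<ominus> t \<otimes> (b \<otimes> w \<ominus> i) = t \<otimes> i \<ominus> b \<otimes> i'"
    using b t w ic by algebra
  finally have "a \<otimes> (b \<otimes> s \<ominus> t \<otimes> u) \<in> I"
    using I.I_l_closed[OF i t] I.I_l_closed[OF is'(1) b] by (simp add: a_minus_def)
  then have "b \<otimes> s \<ominus> t \<otimes> u \<in> I" using ra b t u is'(2) unfolding nonzerodivisor_mod_def by simp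
  then have "\<ominus> (b \<otimes> s \<ominus> t \<otimes> u) \<oplus> s \<otimes> b \<in> I <+> PIdl b"
    using is'(2) unfolding mem_add_PIdl_iff by blast
  moreover have "t \<otimes> u = \<ominus> (b \<otimes> s \<ominus> t \<otimes> u) \<oplus> s \<otimes> b" using b t u is'(2) by algebra
  ultimately show ?thesis by simp
qed

lemma not_mem_add_PIdl_transfer:
  assumes I: "ideal I R" and a: "a \<in> carrier R" and b: "b \<in> carrier R"
    and w: "w \<in> carrier R"
    and i: "i \<in> I" and u: "u \<in> carrier R" and bw: "b \<otimes> w = i \<oplus> u \<otimes> a"
    and w_notin: "w \<notin> I <+> PIdl a" and rb: "nonzerodivisor_mod R I b"
  shows "u \<notin> I <+> PIdl b"
proof
  interpret I: ideal I R by (rule I)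
  assume "u \<in> I <+> PIdl b"
  then obtain i' v where iv: "i' \<in> I" "v \<in> carrier R" "u = i' \<oplus> v \<otimes> b"
    unfolding mem_add_PIdl_iff by blast
  have "b \<otimes> (w \<ominus> v \<otimes> a) = i \<oplus> a \<otimes> i'"
    using bw iv a b w I.Icarr[OF i] I.Icarr[OF iv(1)] by algebra
  then have "w \<ominus> v \<otimes> a \<in> I"
    using rb I.I_l_closed[OF iv(1) a] i w iv(2) a unfolding nonzerodivisor_mod_def by simp
  moreover have "w = (w \<ominus> v \<otimes> a) \<oplus> v \<otimes> a" using w iv(2) a by algebra
  ultimately have "w \<in> I <+> PIdl a" using iv(2) unfolding mem_add_PIdl_iff by blast
  with w_notin show False ..
qed

text \<open>Writing \<open>b w = i + u a\<close> for a witness \<open>w\<close> of \<open>I + (a)\<close>, the element \<open>u\<close> is a witness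
  for \<open>I + (b)\<close>.\<close>
lemma annihilates_nonzero_add_PIdl_transfer:
  assumes I: "ideal I R" and a: "a \<in> carrier R" and b: "b \<in> carrier R" "b \<in> M"
    and ra: "nonzerodivisor_mod R I a" and rb: "nonzerodivisor_mod R I b"
    and ann: "annihilates_nonzero R (I <+> PIdl a) M"
  shows "annihilates_nonzero R (I <+> PIdl b) M"
proof -
  obtain w where w: "w \<in> carrier R" "w \<notin> I <+> PIdl a" "M \<subseteq> colon R (I <+> PIdl a) w"
    using ann unfolding annihilates_nonzero_def by blast
  obtain i u where iu: "i \<in> I" "u \<in> carrier R" "b \<otimes> w = i \<oplus> u \<otimes> a"
    using w(3) b(2) unfolding colon_def mem_add_PIdl_iff by (auto simp: m_comm[OF b(1) w(1)])
  have "M \<subseteq> colon R (I <+> PIdl b) u"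
  proof
    fix t assume "t \<in> M"
    then have t: "t \<in> carrier R" "t \<otimes> w \<in> I <+> PIdl a" using w(3) by (auto simp: colon_def)
    have "t \<otimes> u \<in> I <+> PIdl b"
      by (rule mult_mem_add_PIdl_transfer[OF I a b(1) t(1) w(1) iu t(2) ra])
    then show "t \<in> colon R (I <+> PIdl b) u" using t(1) iu(2) by (simp add: colon_def)
  qed
  moreover have "u \<notin> I <+> PIdl b" by (rule not_mem_add_PIdl_transfer[OF I a b(1) w(1) iu w(2) rb])
  ultimately show ?thesis using iu(2) unfolding annihilates_nonzero_def by blast
qed

lemma nonzerodivisor_mod_zero_cancel:
  "nonzerodivisor_mod R {\<zero>} a \<Longrightarrow> x \<in> carrier R \<Longrightarrow> a \<otimes> x = \<zero> \<Longrightarrow> x = \<zero>"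
  by (simp add: nonzerodivisor_mod_def)

lemma nonzerodivisor_mod_PIdl_swap:
  assumes f: "f \<in> carrier R" and h: "h \<in> carrier R"
    and rf: "nonzerodivisor_mod R {\<zero>} f" and rhf: "nonzerodivisor_mod R (PIdl f) h"
  shows "nonzerodivisor_mod R (PIdl h) f"
  unfolding nonzerodivisor_mod_def
proof (intro ballI impI)
  fix r assume r: "r \<in> carrier R" "f \<otimes> r \<in> PIdl h"
  then obtain c where c: "c \<in> carrier R" "f \<otimes> r = c \<otimes> h" unfolding cgenideal_def by blast
  have "h \<otimes> c = r \<otimes> f" using c r f h by (simp add: m_comm)
  then have "h \<otimes> c \<in> PIdl f" using r(1) unfolding cgenideal_def by blast
  then obtain d where d: "d \<in> carrier R" "c = d \<otimes> f"
    using rhf c unfolding nonzerodivisor_mod_def cgenideal_def by blast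
  have "f \<otimes> (r \<ominus> d \<otimes> h) = \<zero>" using c d f r h by algebra
  then have "r \<ominus> d \<otimes> h = \<zero>" using nonzerodivisor_mod_zero_cancel[OF rf] r d h by simp
  moreover have "r = (r \<ominus> d \<otimes> h) \<oplus> d \<otimes> h" using r d h by algebra
  ultimately have "r = d \<otimes> h" using d h by simp
  then show "r \<in> PIdl h" using d unfolding cgenideal_def by blast
qed

lemma nonzerodivisor_mod_PIdl_of_inter:
  assumes f: "f \<in> carrier R" and g: "g \<in> carrier R"
    and rg: "nonzerodivisor_mod R {\<zero>} g" and inter: "PIdl f \<inter> PIdl g = PIdl (f \<otimes> g)"
  shows "nonzerodivisor_mod R (PIdl f) g"
  unfolding nonzerodivisor_mod_def
proof (intro ballI impI)
  fix r assume r: "r \<in> carrier R" "g \<otimes> r \<in> PIdl f"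
  then have "g \<otimes> r \<in> PIdl (f \<otimes> g)" using inter g m_comm unfolding cgenideal_def by auto
  then obtain k where k: "k \<in> carrier R" "g \<otimes> r = k \<otimes> (f \<otimes> g)" unfolding cgenideal_def by blast
  have "g \<otimes> (r \<ominus> k \<otimes> f) = \<zero>" using k f g r by algebra
  then have "r \<ominus> k \<otimes> f = \<zero>" using nonzerodivisor_mod_zero_cancel[OF rg] r k f by simp
  moreover have "r = (r \<ominus> k \<otimes> f) \<oplus> k \<otimes> f" using r k f by algebra
  ultimately have "r = k \<otimes> f" using k f by simp
  then show "r \<in> PIdl f" using k unfolding cgenideal_def by blast
qed

lemma regular_triple_of_depth_gt_2:
  assumes depth: "depth R > 2" and m: "max_ideal R \<subseteq> carrier R"
  obtains z1 z2 z3 where "z1 \<in> max_ideal R" "z2 \<in> max_ideal R" "z3 \<in> max_ideal R"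
    "nonzerodivisor_mod R {\<zero>} z1" "nonzerodivisor_mod R (PIdl z1) z2"
    "nonzerodivisor_mod R (PIdl z1 <+> PIdl z2) z3"
proof -
  obtain xs where xs: "regular_sequence R (max_ideal R) xs" "2 < enat (length xs)"
    using depth unfolding depth_def less_Sup_iff by blast
  then have "3 \<le> length xs" by (simp add: enat_ord_simps)
  then obtain z1 z2 z3 zs where xs_eq: "xs = z1 # z2 # z3 # zs"
    by (auto simp: Suc_le_length_iff numeral_3_eq_3)
  have z: "z1 \<in> max_ideal R" "z2 \<in> max_ideal R" "z3 \<in> max_ideal R"
    using xs(1) unfolding xs_eq regular_sequence_def by auto
  then have zc: "z1 \<in> carrier R" "z2 \<in> carrier R" using m by auto
  have reg: "\<And>i. i < 3 \<Longrightarrow> nonzerodivisor_mod R (Idl (set (take i xs))) (xs ! i)"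
    using xs(1) unfolding xs_eq regular_sequence_def nonzerodivisor_mod_def by auto
  have "Idl {} = {\<zero>}"
    using genideal_minimal[OF zeroideal, of "{}"] genideal_ideal[of "{}"]
      additive_subgroup.zero_closed[OF ideal.axioms(1)] by blast
  then have "nonzerodivisor_mod R {\<zero>} z1" using reg[of 0] xs_eq by simp
  moreover have "nonzerodivisor_mod R (PIdl z1) z2"
    using reg[of 1] xs_eq cgenideal_eq_genideal[OF zc(1)] by simp
  moreover have "nonzerodivisor_mod R (PIdl z1 <+> PIdl z2) z3"
    using reg[of 2] xs_eq genideal_pair_eq_add_PIdl[OF zc] by (simp add: numeral_2_eq_2)
  ultimately show ?thesis using that z by blast
qed

lemma genideal_Quot_image:
  assumes K: "ideal K R" and S: "S \<subseteq> carrier R"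
  shows "Idl\<^bsub>R Quot K\<^esub> ((+>) K ` S) = (+>) K ` (Idl S)"
proof
  interpret Quot: ring "R Quot K" by (rule ideal.quotient_is_ring[OF K])
  show "Idl\<^bsub>R Quot K\<^esub> ((+>) K ` S) \<subseteq> (+>) K ` (Idl S)"
    using Quot.genideal_minimal[OF ring_ideal_imp_quot_ideal[OF K genideal_ideal[OF S]]]
      genideal_self[OF S] by blast
  have img: "(+>) K ` S \<subseteq> carrier (R Quot K)"
    using ring_hom_closed[OF ideal.rcos_ring_hom[OF K]] S by blast
  have "ideal {r \<in> carrier R. K +> r \<in> Idl\<^bsub>R Quot K\<^esub> ((+>) K ` S)} R"
    by (rule ring_hom_ring.ideal_vimage[OF ideal.rcos_ring_hom_ring[OF K] Quot.genideal_ideal[OF img]])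
  moreover have "S \<subseteq> {r \<in> carrier R. K +> r \<in> Idl\<^bsub>R Quot K\<^esub> ((+>) K ` S)}"
    using Quot.genideal_self[OF img] S by blast
  ultimately show "(+>) K ` (Idl S) \<subseteq> Idl\<^bsub>R Quot K\<^esub> ((+>) K ` S)"
    using genideal_minimal by blast
qed

lemma rcos_mem_image_iff:
  assumes K: "ideal K R" and J: "ideal J R" "K \<subseteq> J" and c: "c \<in> carrier R"
  shows "K +> c \<in> (+>) K ` J \<longleftrightarrow> c \<in> J"
proof -
  have "(+>) K ` J \<subseteq> carrier (R Quot K)"
    using additive_subgroup.a_subset[OF ideal.axioms(1)[OF ring_ideal_imp_quot_ideal[OF K J(1)]]] .
  then have "c \<in> \<Union> ((+>) K ` J) \<longleftrightarrow> K +> c \<in> (+>) K ` J"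
    by (rule canonical_proj_vimage_mem_iff[OF K _ c])
  then show ?thesis using ideal_incl_iff[OF K J(1), THEN iffD1, OF J(2), symmetric] by simp
qed

lemma regular_on_quot_Quot:
  assumes K: "ideal K R" and J: "ideal J R" "K \<subseteq> J" and m: "maximalideal m R" "K \<subseteq> m"
    and a: "a \<in> m" "nonzerodivisor_mod R J a"
  shows "regular_on_quot (R Quot K) ((+>) K ` J) (K +> a)"
proof -
  interpret m: maximalideal m R by (rule m(1))
  have ac: "a \<in> carrier R" by (rule m.Icarr[OF a(1)])
  have hom: "(+>) K \<in> ring_hom R (R Quot K)" by (rule ideal.rcos_ring_hom[OF K])
  have carr: "\<exists>b \<in> carrier R. C = K +> b" if "C \<in> carrier (R Quot K)" for C
    using that unfolding FactRing_def A_RCOSETS_def'[of R K] by auto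
  have "K +> a \<notin> Units (R Quot K)"
  proof
    assume "K +> a \<in> Units (R Quot K)"
    then obtain C where C: "C \<in> carrier (R Quot K)" "C \<otimes>\<^bsub>R Quot K\<^esub> (K +> a) = \<one>\<^bsub>R Quot K\<^esub>"
      unfolding Units_def by blast
    then obtain b where b: "b \<in> carrier R" "C = K +> b" using carr by blast
    then have "K +> (b \<otimes> a) = K +> \<one>"
      using C(2) ring_hom_mult[OF hom b(1) ac] ring_hom_one[OF hom] by simp
    then have "b \<otimes> a \<ominus> \<one> \<in> m" using quotient_eq_iff_same_a_r_cos[OF K] b(1) ac m(2) by blast
    moreover have "b \<otimes> a \<in> m" by (rule m.I_l_closed[OF a(1) b(1)])
    moreover have "\<one> = \<ominus> (b \<otimes> a \<ominus> \<one>) \<oplus> b \<otimes> a" using b(1) ac by algebra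
    ultimately have "\<one> \<in> m" using m.a_closed m.a_inv_closed by metis
    then show False using m.I_notcarr m.one_imp_carrier by blast
  qed
  moreover have "C \<in> (+>) K ` J"
    if C: "C \<in> carrier (R Quot K)" "(K +> a) \<otimes>\<^bsub>R Quot K\<^esub> C \<in> (+>) K ` J" for C
  proof -
    obtain b where b: "b \<in> carrier R" "C = K +> b" using carr C(1) by blast
    then have "K +> (a \<otimes> b) \<in> (+>) K ` J" using C(2) ring_hom_mult[OF hom ac b(1)] by simp
    then have "b \<in> J"
      using rcos_mem_image_iff[OF K J] a(2) ac b(1) unfolding nonzerodivisor_mod_def by blast
    then show ?thesis using b(2) by blast
  qed
  ultimately show ?thesis using ring_hom_closed[OF hom ac] unfolding regular_on_quot_def by blast
qed

lemma regular_on_quot_Quot_pair: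
  assumes m: "maximalideal m R" and f: "f \<in> m" and g: "g \<in> carrier R"
    and a: "a \<in> m" "nonzerodivisor_mod R (PIdl f <+> PIdl g) a"
  shows "regular_on_quot (R Quot PIdl (f \<otimes> g))
           (Idl\<^bsub>R Quot PIdl (f \<otimes> g)\<^esub> {PIdl (f \<otimes> g) +> f, PIdl (f \<otimes> g) +> g}) (PIdl (f \<otimes> g) +> a)"
proof -
  interpret m: maximalideal m R by (rule m)
  define K where "K = PIdl (f \<otimes> g)"
  define J where "J = PIdl f <+> PIdl g"
  have fc: "f \<in> carrier R" by (rule m.Icarr[OF f])
  have K: "ideal K R" unfolding K_def by (rule cgenideal_ideal[OF m_closed[OF fc g]])
  have J: "ideal J R" unfolding J_def by (rule add_PIdl_ideal[OF cgenideal_ideal[OF fc] g])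
  have "f \<in> J" using subset_add_PIdl[OF cgenideal_ideal[OF fc] g] cgenideal_self[OF fc]
    unfolding J_def by blast
  then have "K \<subseteq> J" unfolding K_def by (rule cgenideal_minimal[OF J ideal.I_r_closed[OF J _ g]])
  have "K \<subseteq> m" unfolding K_def by (rule cgenideal_minimal[OF m.is_ideal m.I_r_closed[OF f g]])
  have "Idl\<^bsub>R Quot K\<^esub> {K +> f, K +> g} = (+>) K ` J"
    using genideal_Quot_image[OF K, of "{f, g}"] genideal_pair_eq_add_PIdl[OF fc g] fc g
    unfolding J_def by simp
  moreover have "regular_on_quot (R Quot K) ((+>) K ` J) (K +> a)"
    using regular_on_quot_Quot[OF K J \<open>K \<subseteq> J\<close> m \<open>K \<subseteq> m\<close> a(1)] a(2) unfolding J_def by blast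
  ultimately show ?thesis by (simp add: K_def)
qed

end


lemma (in noetherian_ring) ideal_family_has_maximal:
  assumes "S \<noteq> {}" "\<And>I. I \<in> S \<Longrightarrow> ideal I R"
  obtains M where "M \<in> S" "\<And>I. I \<in> S \<Longrightarrow> M \<subseteq> I \<Longrightarrow> I = M"
proof -
  have "\<exists>M \<in> S. \<forall>I \<in> S. M \<subseteq> I \<longrightarrow> I = M"
  proof (rule subset_Zorn)
    fix C assume C: "subset.chain S C"
    show "\<exists>U \<in> S. \<forall>I \<in> C. I \<subseteq> U"
    proof (cases "C = {}")
      case True
      then show ?thesis using assms(1) by auto
    next
      case False
      have "C \<subseteq> S" using C by (simp add: pred_on.chain_def)
      then have "subset.chain {I. ideal I R} C" using C assms(2) by (auto simp: pred_on.chain_def)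
      then have "\<Union>C \<in> C" by (rule ideal_chain_is_trivial[OF False])
      then show ?thesis using \<open>C \<subseteq> S\<close> by auto
    qed
  qed
  then show ?thesis using that by auto
qed

lemma (in noetherian_ring) exists_maximalideal_above:
  assumes "ideal I R" "I \<noteq> carrier R"
  obtains M where "maximalideal M R" "I \<subseteq> M"
proof -
  define F where "F = {J. ideal J R \<and> I \<subseteq> J \<and> J \<noteq> carrier R}"
  have "F \<noteq> {}" "\<And>J. J \<in> F \<Longrightarrow> ideal J R" using assms unfolding F_def by auto
  then obtain M where M: "M \<in> F" and M_max: "\<And>J. J \<in> F \<Longrightarrow> M \<subseteq> J \<Longrightarrow> J = M"
    using ideal_family_has_maximal by blast
  have "maximalideal M R"
  proof (rule maximalidealI)
    show "ideal M R" "carrier R \<noteq> M" using M unfolding F_def by auto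
    show "J = M \<or> J = carrier R" if "ideal J R" "M \<subseteq> J" "J \<subseteq> carrier R" for J
      using M M_max[of J] that unfolding F_def by blast
  qed
  then show ?thesis using that M unfolding F_def by blast
qed

lemma maximalideal_max_ideal:
  assumes "local_ring R"
  shows "maximalideal (max_ideal R) R"
  using assms theI'[of "\<lambda>m. maximalideal m R"] unfolding local_ring_def max_ideal_def by blast

locale noetherian_cring = noetherian_ring + cring
begin

lemma exists_prime_colon_above:
  assumes I: "ideal I R" and b: "b \<in> carrier R - I"
  obtains w where "w \<in> carrier R - I" "colon R I b \<subseteq> colon R I w" "primeideal (colon R I w) R"
proof -
  define S where "S = {colon R I w | w. w \<in> carrier R - I \<and> colon R I b \<subseteq> colon R I w}"
  have "S \<noteq> {}" "\<And>P. P \<in> S \<Longrightarrow> ideal P R" using b colon_ideal[OF I] unfolding S_def by auto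
  then obtain P where P: "P \<in> S" and P_max: "\<And>P'. P' \<in> S \<Longrightarrow> P \<subseteq> P' \<Longrightarrow> P' = P"
    using ideal_family_has_maximal by blast
  then obtain w where w: "w \<in> carrier R - I" "colon R I b \<subseteq> colon R I w" "P = colon R I w"
    unfolding S_def by blast
  have "\<one> \<notin> colon R I w" using w(1) by (simp add: colon_def)
  then have proper: "carrier R \<noteq> colon R I w" by auto
  \<comment> \<open>\<open>colon R I (x \<otimes> w)\<close> is again in \<open>S\<close>, so maximality makes it equal to \<open>colon R I w\<close>.\<close>
  have "y \<in> colon R I w"
    if xy: "x \<in> carrier R" "y \<in> carrier R" "x \<otimes> y \<in> colon R I w" "x \<notin> colon R I w" for x y
  proof -
    have "colon R I w \<subseteq> colon R I (x \<otimes> w)" using colon_subset_colon_mult[OF I _ xy(1)] w(1) by blast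
    moreover have "x \<otimes> w \<in> carrier R - I" using xy(1,4) w(1) by (simp add: colon_def)
    ultimately have eq: "colon R I (x \<otimes> w) = colon R I w" using P_max w(2,3) unfolding S_def by blast
    have "y \<otimes> (x \<otimes> w) = (x \<otimes> y) \<otimes> w" using xy(1,2) w(1) by (simp add: m_ac)
    then have "y \<in> colon R I (x \<otimes> w)" using xy(2,3) by (simp add: colon_def)
    then show ?thesis using eq by simp
  qed
  then have "primeideal (colon R I w) R"
    using primeidealI[OF colon_ideal[OF I] is_cring proper] w(1) by blast
  then show ?thesis using that w by blast
qed

lemma zerodivisor_mod_in_associated_prime:
  assumes I: "ideal I R" and a: "a \<in> carrier R" and b: "b \<in> carrier R - I" "a \<otimes> b \<in> I"
  shows "\<exists>P \<in> associated_primes R I. a \<in> P"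
proof -
  obtain w where "w \<in> carrier R - I" "colon R I b \<subseteq> colon R I w" "primeideal (colon R I w) R"
    using exists_prime_colon_above[OF I b(1)] .
  moreover have "a \<in> colon R I b" using a b by (simp add: colon_def)
  ultimately show ?thesis unfolding associated_primes_def by blast
qed

lemma finite_associated_primes:
  assumes J: "ideal J R"
  shows "finite (associated_primes R J)"
proof -
  \<comment> \<open>Noetherian induction: take \<open>I \<supseteq> J\<close> maximal such that the elements of \<open>I\<close> produce only
    finitely many prime colon ideals over \<open>J\<close>. If \<open>I\<close> were proper, adjoining some \<open>w\<^sub>0 \<notin> I\<close> with
    \<open>I : w\<^sub>0\<close> prime would add at most the one prime \<open>I : w\<^sub>0\<close>.\<close>
  define primes_in where
    "primes_in I = {colon R J w | w. w \<in> I - J \<and> primeideal (colon R J w) R}" for I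
  define F where "F = {I. ideal I R \<and> J \<subseteq> I \<and> finite (primes_in I)}"
  have "primes_in J = {}" unfolding primes_in_def by blast
  then have "J \<in> F" using J unfolding F_def by simp
  then have "F \<noteq> {}" "\<And>I. I \<in> F \<Longrightarrow> ideal I R" unfolding F_def by auto
  then obtain I where I: "I \<in> F" and I_max: "\<And>I'. I' \<in> F \<Longrightarrow> I \<subseteq> I' \<Longrightarrow> I' = I"
    using ideal_family_has_maximal by blast
  have Ii: "ideal I R" "J \<subseteq> I" using I unfolding F_def by auto
  have "I = carrier R"
  proof (rule ccontr)
    assume "I \<noteq> carrier R"
    then have "\<one> \<notin> I" using ideal.one_imp_carrier[OF Ii(1)] by blast
    then obtain w0 where w0: "w0 \<in> carrier R - I" "primeideal (colon R I w0) R"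
      using exists_prime_colon_above[OF Ii(1), of \<one>] by auto
    define I' where "I' = I <+> PIdl w0"
    have "primes_in I' \<subseteq> insert (colon R I w0) (primes_in I)"
      using colon_of_mem_add_PIdl[OF J Ii _ w0(2)] w0(1) unfolding primes_in_def I'_def by fastforce
    moreover have "ideal I' R" "J \<subseteq> I'"
      using add_PIdl_ideal[OF Ii(1)] subset_add_PIdl[OF Ii(1)] Ii(2) w0(1) unfolding I'_def by auto
    ultimately have "I' \<in> F" using I finite_subset unfolding F_def by blast
    then have "I' = I" using I_max subset_add_PIdl[OF Ii(1)] w0(1) unfolding I'_def by blast
    then show False using gen_mem_add_PIdl[OF Ii(1)] w0(1) unfolding I'_def by blast
  qed
  then have "associated_primes R J \<subseteq> primes_in I"
    unfolding associated_primes_def primes_in_def by blast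
  then show ?thesis using I finite_subset unfolding F_def by blast
qed

lemma exists_nonzerodivisor_mod_all:
  assumes fin: "finite \<J>" and ideals: "\<And>J. J \<in> \<J> \<Longrightarrow> ideal J R"
    and M: "ideal M R" and depth: "\<And>J. J \<in> \<J> \<Longrightarrow> \<not> annihilates_nonzero R J M"
  shows "\<exists>a \<in> M. \<forall>J \<in> \<J>. nonzerodivisor_mod R J a"
proof -
  define S where "S = (\<Union>J \<in> \<J>. associated_primes R J)"
  have "finite S" unfolding S_def using fin ideals finite_associated_primes by blast
  moreover have "\<forall>P \<in> S. primeideal P R" unfolding S_def associated_primes_def by blast
  moreover have "\<forall>P \<in> S. \<not> M \<subseteq> P"
    using depth unfolding S_def associated_primes_def annihilates_nonzero_def by blast
  ultimately obtain a where a: "a \<in> M" "\<forall>P \<in> S. a \<notin> P" using prime_avoidance[OF _ _ M] by blast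
  have "nonzerodivisor_mod R J a" if J: "J \<in> \<J>" for J
    using zerodivisor_mod_in_associated_prime[OF ideals[OF J] ideal.Icarr[OF M a(1)]] a(2) J
    unfolding nonzerodivisor_mod_def S_def by blast
  then show ?thesis using a(1) by blast
qed

lemma exists_nonzerodivisor_mod_pair:
  assumes m: "ideal m R" and f: "f \<in> carrier R" and g: "g \<in> carrier R"
    and rf: "nonzerodivisor_mod R {\<zero>} f" and rfg: "nonzerodivisor_mod R (PIdl f) g"
    and z: "z1 \<in> m" "z2 \<in> m" "z3 \<in> m"
    and r1: "nonzerodivisor_mod R {\<zero>} z1" and r2: "nonzerodivisor_mod R (PIdl z1) z2"
    and r3: "nonzerodivisor_mod R (PIdl z1 <+> PIdl z2) z3"
  shows "\<exists>a \<in> m. nonzerodivisor_mod R (PIdl f <+> PIdl g) a"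
proof -
  have zc: "z1 \<in> carrier R" "z2 \<in> carrier R" using z ideal.Icarr[OF m] by auto
  have "\<not> annihilates_nonzero R ({\<zero>} <+> PIdl z1) m"
    using nonzerodivisor_mod_not_annihilates_nonzero[OF r2 z(2)] zero_add_PIdl[OF zc(1)] by simp
  then have "\<not> annihilates_nonzero R (PIdl f) m"
    using annihilates_nonzero_add_PIdl_transfer[OF zeroideal f zc(1) z(1) rf r1] zero_add_PIdl[OF f] by auto
  moreover note nonzerodivisor_mod_not_annihilates_nonzero[OF r1 z(1)]
    nonzerodivisor_mod_not_annihilates_nonzero[OF r2 z(2)]
  ultimately have "\<exists>h \<in> m. \<forall>J \<in> {{\<zero>}, PIdl f, PIdl z1}. nonzerodivisor_mod R J h"
    by (intro exists_nonzerodivisor_mod_all[OF _ _ m]) (auto intro: zeroideal cgenideal_ideal f zc(1))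
  then obtain h where h: "h \<in> m" "nonzerodivisor_mod R (PIdl f) h" "nonzerodivisor_mod R (PIdl z1) h"
    and rh: "nonzerodivisor_mod R {\<zero>} h" by auto
  have hc: "h \<in> carrier R" using h(1) ideal.Icarr[OF m] by blast
  have "\<not> annihilates_nonzero R (PIdl f <+> PIdl g) m"
  proof
    assume "annihilates_nonzero R (PIdl f <+> PIdl g) m"
    then have "annihilates_nonzero R (PIdl f <+> PIdl h) m"
      by (rule annihilates_nonzero_add_PIdl_transfer[OF cgenideal_ideal[OF f] g hc h(1) rfg h(2)])
    then have "annihilates_nonzero R (PIdl h <+> PIdl f) m" using add_PIdl_commute[OF f hc] by simp
    then have "annihilates_nonzero R (PIdl h <+> PIdl z1) m"
      by (rule annihilates_nonzero_add_PIdl_transfer[OF cgenideal_ideal[OF hc] f zc(1) z(1)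
            nonzerodivisor_mod_PIdl_swap[OF f hc rf h(2)] nonzerodivisor_mod_PIdl_swap[OF zc(1) hc r1 h(3)]])
    then have "annihilates_nonzero R (PIdl z1 <+> PIdl h) m" using add_PIdl_commute[OF zc(1) hc] by simp
    then have "annihilates_nonzero R (PIdl z1 <+> PIdl z2) m"
      by (rule annihilates_nonzero_add_PIdl_transfer[OF cgenideal_ideal[OF zc(1)] hc zc(2) z(2) h(3) r2])
    then show False using nonzerodivisor_mod_not_annihilates_nonzero[OF r3 z(3)] by contradiction
  qed
  then show ?thesis
    using exists_nonzerodivisor_mod_all[OF _ _ m, of "{PIdl f <+> PIdl g}"]
      add_PIdl_ideal[OF cgenideal_ideal[OF f] g] by auto
qed

lemma nonunit_in_max_ideal:
  assumes local: "local_ring R" and x: "x \<in> carrier R" "x \<notin> Units R"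
  shows "x \<in> max_ideal R"
proof -
  have "PIdl x \<noteq> carrier R"
  proof
    assume "PIdl x = carrier R"
    then obtain y where y: "y \<in> carrier R" "\<one> = y \<otimes> x" unfolding cgenideal_def by blast
    then have "x \<in> Units R" using x(1) m_comm[OF x(1) y(1)] unfolding Units_def by auto
    with x(2) show False ..
  qed
  then obtain M where M: "maximalideal M R" "PIdl x \<subseteq> M"
    using exists_maximalideal_above cgenideal_ideal[OF x(1)] by blast
  then have "M = max_ideal R"
    using local unfolding local_ring_def max_ideal_def by (simp add: the1_equality)
  then show ?thesis using M(2) cgenideal_self[OF x(1)] by blast
qed

end

theorem lemma2p6:
  fixes Q :: "('a, 'b) ring_scheme" (structure)
    and f g :: 'a
  assumes "local_ring Q" and "noetherian_ring Q"
    and "regular_on_quot Q {\<zero>} f" and "regular_on_quot Q {\<zero>} g"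
    and "PIdl f \<inter> PIdl g = PIdl (f \<otimes> g)"
    and "depth Q > 2"
  shows "\<exists>a \<in> carrier (Q Quot PIdl (f \<otimes> g)).
           regular_on_quot (Q Quot PIdl (f \<otimes> g))
             (Idl\<^bsub>Q Quot PIdl (f \<otimes> g)\<^esub> {PIdl (f \<otimes> g) +> f, PIdl (f \<otimes> g) +> g}) a"
proof -
  interpret noetherian_cring Q
    using assms(1,2) by (simp add: noetherian_cring_def local_ring_def)
  interpret m: maximalideal "max_ideal Q" Q by (rule maximalideal_max_ideal[OF assms(1)])
  have f: "f \<in> carrier Q" "f \<notin> Units Q" and g: "g \<in> carrier Q"
    using assms(3,4) unfolding regular_on_quot_def by simp_all
  note rf = regular_on_quot_imp_nonzerodivisor_mod[OF assms(3)]
  note rg = regular_on_quot_imp_nonzerodivisor_mod[OF assms(4)]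
  obtain z1 z2 z3 where z: "z1 \<in> max_ideal Q" "z2 \<in> max_ideal Q" "z3 \<in> max_ideal Q"
    "nonzerodivisor_mod Q {\<zero>} z1" "nonzerodivisor_mod Q (PIdl z1) z2"
    "nonzerodivisor_mod Q (PIdl z1 <+> PIdl z2) z3"
    by (rule regular_triple_of_depth_gt_2[OF assms(6) m.a_subset])
  obtain a where a: "a \<in> max_ideal Q" "nonzerodivisor_mod Q (PIdl f <+> PIdl g) a"
    using exists_nonzerodivisor_mod_pair[OF m.is_ideal f(1) g(1) rf
        nonzerodivisor_mod_PIdl_of_inter[OF f(1) g(1) rg assms(5)] z] by blast
  have "f \<in> max_ideal Q" by (rule nonunit_in_max_ideal[OF assms(1) f(1,2)])
  then have "regular_on_quot (Q Quot PIdl (f \<otimes> g))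
      (Idl\<^bsub>Q Quot PIdl (f \<otimes> g)\<^esub> {PIdl (f \<otimes> g) +> f, PIdl (f \<otimes> g) +> g}) (PIdl (f \<otimes> g) +> a)"
    by (rule regular_on_quot_Quot_pair[OF m.maximalideal_axioms _ g a])
  then show ?thesis unfolding regular_on_quot_def by blast
qed

end
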